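(* Let $(G,\mathcal{H})$ be a group pair and $V$ a normed $\mathbb{R}[G]$-module. Then $H^k_b(G,\mathcal{H};\ell^\infty(G,V))=0$ for every $k\ge2$.
   Context: A group pair $(G,\mathcal H)$ consists of a group $G$ and a family $\mathcal H=\{H_i\}_{i\in I}$ of subgroups (repetitions allowed). A classifying pair $(X,Y)$ for it: $X$ a cellular $K(G,1)$, $Y\subseteq X$ a subcomplex with components $\{Y_i\}_{i\in I}$ (distinct for distinct indices), each $Y_i$ a $K(H_i,1)$ whose inclusion induces (up to a choice of path between basepoints) the inclusion $H_i\le G$. Let $(\widetilde X,\widetilde Y)$ be its universal cover ($\widetilde Y$ the preimage of $Y$). For a normed $\mathbb{R}[G]$-module $U$, the relative bounded cohomology $H^\bullet_b(G,\mathcal H;U)$ is the cohomology of the complex of $G$-equivariant uniformly bounded singular $U$-valued cochains on $\widetilde X$ vanishing on simplices in $\widetilde Y$. $\ell^\infty(G,V)$ is the normed $\mathbb{R}[G]$-module of bounded functions $G\to V$ with sup norm and action $(g f)(h)=g\cdot f(g^{-1}h)$. *)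

theory Defs
  imports "HOL-Homology.Homology" "HOL-Algebra.Group"
begin

definition normed_RG_module :: "('g, 'b) monoid_scheme \<Rightarrow> ('g \<Rightarrow> 'v::real_normed_vector \<Rightarrow> 'v) \<Rightarrow> bool" where
  "normed_RG_module G \<rho> \<longleftrightarrow>
     (\<forall>g\<in>carrier G. linear (\<rho> g) \<and> (\<forall>v. norm (\<rho> g v) = norm v)) \<and>
     (\<forall>v. \<rho> \<one>\<^bsub>G\<^esub> v = v) \<and>
     (\<forall>g\<in>carrier G. \<forall>h\<in>carrier G. \<forall>v. \<rho> (g \<otimes>\<^bsub>G\<^esub> h) v = \<rho> g (\<rho> h v))"

definition linf :: "('g, 'b) monoid_scheme \<Rightarrow> ('g \<Rightarrow> 'v::real_normed_vector) set" where
  "linf G = {f. (\<forall>h. h \<notin> carrier G \<longrightarrow> f h = 0) \<and> (\<exists>B. \<forall>h\<in>carrier G. norm (f h) \<le> B)}"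

definition linf_act :: "('g, 'b) monoid_scheme \<Rightarrow> ('g \<Rightarrow> 'v::real_normed_vector \<Rightarrow> 'v) \<Rightarrow> 'g \<Rightarrow> ('g \<Rightarrow> 'v) \<Rightarrow> ('g \<Rightarrow> 'v)" where
  "linf_act G \<rho> g f = (\<lambda>h. if h \<in> carrier G then \<rho> g (f (inv\<^bsub>G\<^esub> g \<otimes>\<^bsub>G\<^esub> h)) else 0)"

text \<open>The universal cover (Xt, Yt) of a classifying pair for (G, {H_i}), given as a contractible
  space Xt with a covering space action of G, and a subspace Yt whose path components are the
  translates g.(C i) of contractible components C i, with stabiliser of C i equal to H i and
  distinct indices giving distinct G-orbits of components.\<close>
definition classifying_pair_cover ::
  "('g, 'b) monoid_scheme \<Rightarrow> 'i set \<Rightarrow> ('i \<Rightarrow> 'g set) \<Rightarrow> 'x topology \<Rightarrow> ('g \<Rightarrow> 'x \<Rightarrow> 'x)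
     \<Rightarrow> 'x set \<Rightarrow> ('i \<Rightarrow> 'x set) \<Rightarrow> bool" where
  "classifying_pair_cover G I H X \<phi> Yt C \<longleftrightarrow>
     (\<forall>g\<in>carrier G. homeomorphic_map X X (\<phi> g)) \<and>
     (\<forall>x\<in>topspace X. \<phi> \<one>\<^bsub>G\<^esub> x = x) \<and>
     (\<forall>g\<in>carrier G. \<forall>h\<in>carrier G. \<forall>x\<in>topspace X. \<phi> (g \<otimes>\<^bsub>G\<^esub> h) x = \<phi> g (\<phi> h x)) \<and>
     (\<forall>x\<in>topspace X. \<exists>U. openin X U \<and> x \<in> U \<and>
         (\<forall>g\<in>carrier G. g \<noteq> \<one>\<^bsub>G\<^esub> \<longrightarrow> \<phi> g ` U \<inter> U = {})) \<and>
     topspace X \<noteq> {} \<and> contractible_space X \<and>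
     closedin X Yt \<and>
     path_components_of (subtopology X Yt) = {\<phi> g ` C i | i g. i \<in> I \<and> g \<in> carrier G} \<and>
     (\<forall>i\<in>I. \<forall>j\<in>I. \<forall>g\<in>carrier G. \<forall>g'\<in>carrier G.
         \<phi> g ` C i = \<phi> g' ` C j \<longleftrightarrow> (i = j \<and> inv\<^bsub>G\<^esub> g \<otimes>\<^bsub>G\<^esub> g' \<in> H i)) \<and>
     (\<forall>i\<in>I. C i \<noteq> {} \<and> openin (subtopology X Yt) (C i) \<and> contractible_space (subtopology X (C i)))"

definition rel_bcochain ::
  "('g, 'b) monoid_scheme \<Rightarrow> ('g \<Rightarrow> 'v::real_normed_vector \<Rightarrow> 'v) \<Rightarrow> 'x topology \<Rightarrow> ('g \<Rightarrow> 'x \<Rightarrow> 'x)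
     \<Rightarrow> 'x set \<Rightarrow> nat \<Rightarrow> (((nat \<Rightarrow> real) \<Rightarrow> 'x) \<Rightarrow> 'g \<Rightarrow> 'v) \<Rightarrow> bool" where
  "rel_bcochain G \<rho> X \<phi> Yt k c \<longleftrightarrow>
     (\<forall>\<sigma>. singular_simplex k X \<sigma> \<longrightarrow> c \<sigma> \<in> linf G) \<and>
     (\<exists>B. \<forall>\<sigma>. \<forall>h\<in>carrier G. singular_simplex k X \<sigma> \<longrightarrow> norm (c \<sigma> h) \<le> B) \<and>
     (\<forall>g\<in>carrier G. \<forall>\<sigma>. singular_simplex k X \<sigma> \<longrightarrow>
         c (restrict (\<phi> g \<circ> \<sigma>) (standard_simplex k)) = linf_act G \<rho> g (c \<sigma>)) \<and>
     (\<forall>\<sigma>. singular_simplex k X \<sigma> \<and> \<sigma> ` standard_simplex k \<subseteq> Yt \<longrightarrow> c \<sigma> = (\<lambda>h. 0))"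

definition cobound :: "nat \<Rightarrow> (((nat \<Rightarrow> real) \<Rightarrow> 'x) \<Rightarrow> 'g \<Rightarrow> 'v::real_vector)
     \<Rightarrow> ((nat \<Rightarrow> real) \<Rightarrow> 'x) \<Rightarrow> 'g \<Rightarrow> 'v" where
  "cobound k c \<sigma> = (\<lambda>h. \<Sum>j\<le>Suc k. ((-1::real) ^ j) *\<^sub>R c (singular_face (Suc k) j \<sigma>) h)"

text \<open>Vanishing of the degree-k relative bounded cohomology H^k_b(G,H; l-infinity(G,V)),
  computed from the given cover (Xt,Yt): every relative bounded equivariant k-cocycle is the
  coboundary of a relative bounded equivariant (k-1)-cochain (for k \<ge> 1).\<close>
definition rel_bcohom_vanishes ::
  "('g, 'b) monoid_scheme \<Rightarrow> ('g \<Rightarrow> 'v::real_normed_vector \<Rightarrow> 'v) \<Rightarrow> 'x topology \<Rightarrow> ('g \<Rightarrow> 'x \<Rightarrow> 'x)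
     \<Rightarrow> 'x set \<Rightarrow> nat \<Rightarrow> bool" where
  "rel_bcohom_vanishes G \<rho> X \<phi> Yt k \<longleftrightarrow>
     (\<forall>c. rel_bcochain G \<rho> X \<phi> Yt k c \<and>
          (\<forall>\<tau>. singular_simplex (Suc k) X \<tau> \<longrightarrow> cobound k c \<tau> = (\<lambda>h. 0))
       \<longrightarrow> (\<exists>b. rel_bcochain G \<rho> X \<phi> Yt (k - 1) b \<and>
               (\<forall>\<sigma>. singular_simplex k X \<sigma> \<longrightarrow> cobound (k - 1) b \<sigma> = c \<sigma>)))"

end

theory Submission
  imports Defs
begin

(* An equivariant cochain c with values in l^infinity(G,V) is recovered from the V-valued
   cochain s |-> c s 1 via (c s) h = h . c (h^-1 s) 1, and this correspondence preserves
   boundedness, coboundaries and vanishing on Yt.  So it suffices that on the contractible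
   space X every bounded cocycle of degree k >= 2 vanishing on Yt has a bounded primitive
   vanishing on Yt.

   On a space whose path components are contractible, a contraction h of a component yields
   the chain homotopy sigma |-> h_*(P sigma) from the identity to a constant map, P being the
   prism operator.  By the method of acyclic models P transports one fixed chain on the
   cylinder over each standard simplex, so P sigma has l^1-norm bounded independently of
   sigma, and a bounded cocycle c gets the bounded primitive c o P, corrected on constant
   simplices.  In the relative case an absolute primitive is corrected by the coboundary of a
   bounded primitive of its restriction to Yt, a cocycle of degree k - 1 >= 1: this is where
   k >= 2 is needed. *)


definition chain_eval :: "('a \<Rightarrow> 'w::real_vector) \<Rightarrow> ('a \<Rightarrow>\<^sub>0 int) \<Rightarrow> 'w" where
  "chain_eval c x = (\<Sum>s\<in>Poly_Mapping.keys x. real_of_int (poly_mapping.lookup x s) *\<^sub>R c s)"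

definition chain_weight :: "('a \<Rightarrow>\<^sub>0 int) \<Rightarrow> real" where
  "chain_weight x = (\<Sum>s\<in>Poly_Mapping.keys x. \<bar>real_of_int (poly_mapping.lookup x s)\<bar>)"

lemma chain_eval_superset:
  assumes "finite A" "Poly_Mapping.keys x \<subseteq> A"
  shows "chain_eval c x = (\<Sum>s\<in>A. real_of_int (poly_mapping.lookup x s) *\<^sub>R c s)"
  unfolding chain_eval_def
  by (rule sum.mono_neutral_left) (use assms in \<open>auto simp: in_keys_iff\<close>)

lemma chain_eval_add: "chain_eval c (x + y) = chain_eval c x + chain_eval c y"
proof -
  let ?A = "Poly_Mapping.keys x \<union> Poly_Mapping.keys y \<union> Poly_Mapping.keys (x + y)"
  have "chain_eval c (x + y) = (\<Sum>s\<in>?A. real_of_int (poly_mapping.lookup (x + y) s) *\<^sub>R c s)"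
    by (rule chain_eval_superset) auto
  also have "\<dots> = (\<Sum>s\<in>?A. real_of_int (poly_mapping.lookup x s) *\<^sub>R c s)
                 + (\<Sum>s\<in>?A. real_of_int (poly_mapping.lookup y s) *\<^sub>R c s)"
    by (simp add: lookup_add scaleR_add_left sum.distrib)
  also have "\<dots> = chain_eval c x + chain_eval c y"
    by (subst (1 2) chain_eval_superset[of ?A]) auto
  finally show ?thesis .
qed

lemma chain_eval_minus: "chain_eval c (- x) = - chain_eval c x"
  by (simp add: chain_eval_def sum_negf)

lemma chain_eval_diff: "chain_eval c (x - y) = chain_eval c x - chain_eval c y"
  by (metis chain_eval_add chain_eval_minus diff_conv_add_uminus)

lemma chain_eval_of [simp]: "chain_eval c (frag_of s) = c s"
  by (simp add: chain_eval_def keys_frag_of)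

lemma chain_eval_cmul: "chain_eval c (frag_cmul k x) = real_of_int k *\<^sub>R chain_eval c x"
proof -
  have "chain_eval c (frag_cmul k x)
      = (\<Sum>s\<in>Poly_Mapping.keys x. real_of_int (poly_mapping.lookup (frag_cmul k x) s) *\<^sub>R c s)"
    by (rule chain_eval_superset) (auto simp: keys_cmul)
  then show ?thesis
    by (simp add: chain_eval_def scaleR_sum_right)
qed

lemma chain_eval_0 [simp]: "chain_eval c 0 = 0"
  by (simp add: chain_eval_def)

lemma chain_eval_sum: "chain_eval c (sum g I) = (\<Sum>i\<in>I. chain_eval c (g i))"
  by (induction I rule: infinite_finite_induct) (simp_all add: chain_eval_add)

lemma chain_eval_frag_extend: "chain_eval c (frag_extend F x) = chain_eval (\<lambda>s. chain_eval c (F s)) x"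
proof -
  have "Poly_Mapping.keys x \<subseteq> UNIV" by simp
  then show ?thesis
    by (induction x rule: frag_induction) (simp_all add: frag_extend_diff chain_eval_diff)
qed

lemma chain_eval_chain_map: "chain_eval c (chain_map p g x) = chain_eval (\<lambda>s. c (simplex_map p g s)) x"
  by (simp add: chain_map_def chain_eval_frag_extend)

lemma chain_eval_eq_0: "(\<And>s. s \<in> Poly_Mapping.keys x \<Longrightarrow> c s = 0) \<Longrightarrow> chain_eval c x = 0"
  by (simp add: chain_eval_def)

lemma norm_chain_eval_le:
  fixes c :: "'a \<Rightarrow> 'w::real_normed_vector"
  assumes "\<And>s. s \<in> Poly_Mapping.keys x \<Longrightarrow> norm (c s) \<le> B"
  shows "norm (chain_eval c x) \<le> chain_weight x * B"
proof -
  have "norm (chain_eval c x) \<le> (\<Sum>s\<in>Poly_Mapping.keys x. norm (real_of_int (poly_mapping.lookup x s) *\<^sub>R c s))"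
    unfolding chain_eval_def by (rule norm_sum)
  also have "\<dots> \<le> (\<Sum>s\<in>Poly_Mapping.keys x. \<bar>real_of_int (poly_mapping.lookup x s)\<bar> * B)"
    by (rule sum_mono) (simp add: assms mult_left_mono)
  finally show ?thesis
    by (simp add: chain_weight_def sum_distrib_right)
qed

definition coboundary :: "nat \<Rightarrow> (((nat \<Rightarrow> real) \<Rightarrow> 'x) \<Rightarrow> 'w::real_vector) \<Rightarrow> ((nat \<Rightarrow> real) \<Rightarrow> 'x) \<Rightarrow> 'w"
  where "coboundary k c s = (\<Sum>j\<le>Suc k. ((-1::real) ^ j) *\<^sub>R c (singular_face (Suc k) j s))"

lemma chain_eval_chain_boundary: "chain_eval c (chain_boundary (Suc k) x) = chain_eval (coboundary k c) x"
proof -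
  have "chain_eval c (chain_boundary (Suc k) (frag_of s)) = coboundary k c s" for s
    by (simp del: sum.atMost_Suc add: chain_boundary_of coboundary_def chain_eval_sum chain_eval_cmul)
  then show ?thesis
    by (simp add: chain_boundary_def chain_eval_frag_extend)
qed

lemma coboundary_coboundary:
  assumes "singular_simplex (Suc (Suc k)) X s"
  shows "coboundary (Suc k) (coboundary k c) s = 0"
proof -
  have "coboundary (Suc k) (coboundary k c) s
      = chain_eval c (chain_boundary (Suc k) (chain_boundary (Suc (Suc k)) (frag_of s)))"
    by (simp add: chain_eval_chain_boundary)
  also have "\<dots> = 0"
    using chain_boundary_boundary_alt[of "Suc k" X "frag_of s"] assms
    by (simp add: singular_chain_of)
  finally show ?thesis .
qed

lemma coboundary_diff: "coboundary k (\<lambda>s. c s - d s) s = coboundary k c s - coboundary k d s"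
  by (simp add: coboundary_def scaleR_diff_right sum_subtractf)

lemma coboundary_cong:
  "(\<And>j. j \<le> Suc k \<Longrightarrow> c (singular_face (Suc k) j s) = d (singular_face (Suc k) j s))
    \<Longrightarrow> coboundary k c s = coboundary k d s"
  by (simp add: coboundary_def)

lemma coboundary_const: "coboundary k (\<lambda>s. v) s = (if odd k then v else 0)"
proof -
  have "(\<Sum>j\<le>n. (-1::real) ^ j) = (if even n then 1 else 0)" for n
    by (induction n) auto
  then show ?thesis
    by (simp del: sum.atMost_Suc add: coboundary_def flip: scaleR_sum_left)
qed

section \<open>The prism operator\<close>

abbreviation simplex_topology :: "nat \<Rightarrow> (nat \<Rightarrow> real) topology" where
  "simplex_topology q \<equiv> subtopology (powertop_real UNIV) (standard_simplex q)"

definition identity_simplex :: "nat \<Rightarrow> (nat \<Rightarrow> real) \<Rightarrow> nat \<Rightarrow> real" where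
  "identity_simplex q = restrict id (standard_simplex q)"

definition cylinder :: "'a topology \<Rightarrow> (real \<times> 'a) topology" where
  "cylinder X = prod_topology (top_of_set {0..1}) X"

definition cylinder_ends :: "nat \<Rightarrow> 'a chain \<Rightarrow> (real \<times> 'a) chain" where
  "cylinder_ends q c = chain_map q (Pair 1) c - chain_map q (Pair 0) c"

definition cylinder_chain ::
  "nat \<Rightarrow> (real \<times> (nat \<Rightarrow> real)) chain \<Rightarrow> 'a chain \<Rightarrow> (real \<times> 'a) chain" where
  "cylinder_chain q P = frag_extend (\<lambda>\<sigma>. chain_map (Suc q) (\<lambda>(t, x). (t, \<sigma> x)) P)"

definition prism_boundary ::
  "nat \<Rightarrow> (real \<times> (nat \<Rightarrow> real)) chain \<Rightarrow> (real \<times> (nat \<Rightarrow> real)) chain" where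
  "prism_boundary q P = cylinder_ends q (frag_of (identity_simplex q))
     - cylinder_chain (q - 1) P (chain_boundary q (frag_of (identity_simplex q)))"

(* Any filler will do: one exists by prism_model_spec, and transporting this single chain along
   all simplices is what makes prism natural and uniformly bounded. *)
fun prism_model :: "nat \<Rightarrow> (real \<times> (nat \<Rightarrow> real)) chain" where
  "prism_model q =
     (SOME d. singular_chain (Suc q) (cylinder (simplex_topology q)) d \<and>
        chain_boundary (Suc q) d = prism_boundary q (if q = 0 then 0 else prism_model (q - 1)))"

declare prism_model.simps [simp del]

definition prism :: "nat \<Rightarrow> 'a chain \<Rightarrow> (real \<times> 'a) chain" where
  "prism q = cylinder_chain q (prism_model q)"

lemma singular_simplex_identity: "singular_simplex q (simplex_topology q) (identity_simplex q)"
  unfolding singular_simplex_def identity_simplex_def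
  by (auto intro: continuous_map_eq[OF continuous_map_id])

lemma topspace_cylinder: "topspace (cylinder X) = {0..1} \<times> topspace X"
  by (simp add: cylinder_def)

lemma continuous_map_cylinder_Pair:
  "t \<in> {0..1} \<Longrightarrow> continuous_map X (cylinder X) (Pair t)"
  by (simp add: cylinder_def continuous_map_pairwise o_def)

lemma continuous_map_cylinder:
  "continuous_map X Y f \<Longrightarrow> continuous_map (cylinder X) (cylinder Y) (\<lambda>(t, x). (t, f x))"
  using continuous_map_prod_top[of "top_of_set {0..1}" X "top_of_set {0..1}" Y id f]
  by (simp add: cylinder_def)

lemma chain_boundary_cylinder_ends:
  assumes "singular_chain q X c"
  shows "chain_boundary q (cylinder_ends q c) = cylinder_ends (q - 1) (chain_boundary q c)"
  using assms by (simp add: cylinder_ends_def chain_boundary_diff chain_boundary_chain_map)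

lemma contractible_space_standard_simplex: "contractible_space (simplex_topology q)"
proof -
  define v :: "nat \<Rightarrow> real" where "v = (\<lambda>i. if i = 0 then 1 else 0)"
  have v: "v \<in> standard_simplex q"
    by (simp add: v_def basis_in_standard_simplex)
  define h where "h = (\<lambda>(u::real, x::nat \<Rightarrow> real) i. (1 - u) * x i + u * v i)"
  have "continuous_map (prod_topology (top_of_set {0..1}) (simplex_topology q)) (simplex_topology q) h"
    unfolding continuous_map_in_subtopology
  proof
    have "continuous_map (prod_topology (top_of_set {0..1}) (simplex_topology q)) euclideanreal fst"
      using continuous_map_fst continuous_map_into_fulltopology by blast
    moreover have "continuous_map (prod_topology (top_of_set {0..1}) (simplex_topology q)) euclideanreal
        (\<lambda>z. snd z i)" for i
    proof -
      have "continuous_map (simplex_topology q) euclideanreal (\<lambda>x. x i)"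
        by (intro continuous_map_from_subtopology continuous_map_product_projection) simp
      then show ?thesis
        using continuous_map_compose[OF continuous_map_snd] by (force simp: o_def)
    qed
    ultimately show "continuous_map (prod_topology (top_of_set {0..1}) (simplex_topology q)) (powertop_real UNIV) h"
      unfolding continuous_map_componentwise_UNIV h_def case_prod_unfold
      by (intro allI continuous_intros) auto
    show "h \<in> topspace (prod_topology (top_of_set {0..1}) (simplex_topology q)) \<rightarrow> standard_simplex q"
      using v by (auto simp: h_def convex_standard_simplex)
  qed
  then have "homotopic_with (\<lambda>x. True) (simplex_topology q) (simplex_topology q) id (\<lambda>x. v)"
    unfolding homotopic_with_def by (intro exI[of _ h]) (auto simp: h_def)
  then show ?thesis
    unfolding contractible_space_def by blast
qed

lemma contractible_space_cylinder:
  "contractible_space X \<Longrightarrow> contractible_space (cylinder X)"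
  by (simp add: cylinder_def contractible_space_prod_topology convex_imp_contractible is_interval_convex_1)

lemma singular_chain_cylinder_chain:
  assumes "singular_chain (Suc q) (cylinder (simplex_topology q)) P" "singular_chain q X c"
  shows "singular_chain (Suc q) (cylinder X) (cylinder_chain q P c)"
  unfolding cylinder_chain_def
proof (rule singular_chain_extend)
  fix \<sigma> assume "\<sigma> \<in> Poly_Mapping.keys c"
  then have "continuous_map (simplex_topology q) X \<sigma>"
    using assms(2) by (auto simp: singular_chain_def singular_simplex_def)
  then show "singular_chain (Suc q) (cylinder X) (chain_map (Suc q) (\<lambda>(t, x). (t, \<sigma> x)) P)"
    using assms(1) continuous_map_cylinder singular_chain_chain_map by blast
qed

lemma chain_map_cylinder_chain:
  assumes "singular_chain (Suc q) (cylinder (simplex_topology q)) P"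
  shows "chain_map (Suc q) (\<lambda>(t, x). (t, f x)) (cylinder_chain q P c)
       = cylinder_chain q P (chain_map q f c)"
proof -
  have "Poly_Mapping.keys c \<subseteq> UNIV" by simp
  then show ?thesis
  proof (induction c rule: frag_induction)
    case (one \<sigma>)
    have "chain_map (Suc q) ((\<lambda>(t, x). (t, f x)) \<circ> (\<lambda>(t, x). (t, \<sigma> x))) P
        = chain_map (Suc q) (\<lambda>(t, x). (t, simplex_map q f \<sigma> x)) P"
      by (rule chain_map_eq[OF assms]) (auto simp: topspace_cylinder simplex_map_def)
    then show ?case
      by (simp add: cylinder_chain_def chain_map_compose)
  qed (auto simp: cylinder_chain_def chain_map_diff frag_extend_diff)
qed

lemma chain_boundary_cylinder_chain:
  assumes P: "singular_chain (Suc q) (cylinder (simplex_topology q)) P"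
    and boundary_P: "chain_boundary (Suc q) P = prism_boundary q P'"
    and P': "singular_chain (Suc (q - 1)) (cylinder (simplex_topology (q - 1))) P'"
    and c: "singular_chain q X c"
  shows "chain_boundary (Suc q) (cylinder_chain q P c)
       = cylinder_ends q c - cylinder_chain (q - 1) P' (chain_boundary q c)"
  using c unfolding singular_chain_def
proof (induction c rule: frag_induction)
  case (one \<sigma>)
  then have \<sigma>: "singular_simplex q X \<sigma>" by simp
  have ends: "chain_map q (\<lambda>(t, x). (t, \<sigma> x)) (cylinder_ends q (frag_of (identity_simplex q)))
      = cylinder_ends q (frag_of \<sigma>)"
  proof -
    have "simplex_map q (\<lambda>(t, x). (t, \<sigma> x)) (simplex_map q (Pair u) (identity_simplex q))
        = simplex_map q (Pair u) \<sigma>" for u :: real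
      unfolding simplex_map_def identity_simplex_def by (rule restrict_ext) simp
    then show ?thesis
      by (simp add: cylinder_ends_def chain_map_diff)
  qed
  have inner: "chain_map q (\<lambda>(t, x). (t, \<sigma> x)) (cylinder_chain (q - 1) P' (chain_boundary q (frag_of (identity_simplex q))))
      = cylinder_chain (q - 1) P' (chain_boundary q (frag_of \<sigma>))"
  proof (cases q)
    case (Suc p)
    have "simplex_map q \<sigma> (identity_simplex q) = \<sigma>"
      using \<sigma> by (auto simp: simplex_map_def identity_simplex_def singular_simplex_def extensional_def fun_eq_iff)
    then have "chain_map p \<sigma> (chain_boundary q (frag_of (identity_simplex q))) = chain_boundary q (frag_of \<sigma>)"
      using chain_boundary_chain_map[OF singular_chain_of[THEN iffD2, OF singular_simplex_identity], of q \<sigma>] Suc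
      by simp
    then show ?thesis
      using chain_map_cylinder_chain[of p P' \<sigma>] P' Suc by simp
  qed (simp add: chain_boundary_def cylinder_chain_def)
  have "chain_boundary (Suc q) (cylinder_chain q P (frag_of \<sigma>))
      = chain_map q (\<lambda>(t, x). (t, \<sigma> x)) (chain_boundary (Suc q) P)"
    using chain_boundary_chain_map[OF P] by (simp add: cylinder_chain_def)
  then show ?case
    by (simp only: boundary_P prism_boundary_def chain_map_diff ends inner)
next
  case (diff a b)
  then show ?case
    by (simp add: cylinder_chain_def cylinder_ends_def chain_boundary_diff frag_extend_diff chain_map_diff)
qed (simp add: cylinder_chain_def cylinder_ends_def)

lemma contractible_space_imp_singular_boundary:
  assumes X: "contractible_space X" and c: "singular_relcycle p X {} c" and "p \<noteq> 0"
  shows "singular_relboundary p X {} c"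
proof (cases "topspace X = {}")
  case True
  then show ?thesis
    using c by (simp add: singular_relcycle singular_chain_empty)
next
  case False
  obtain a where hom: "homotopic_with (\<lambda>h. True) X X id (\<lambda>x. a)"
    using X unfolding contractible_space_def by blast
  have "continuous_map X X (\<lambda>x. a)"
    using homotopic_with_imp_continuous_maps[OF hom] by blast
  with False have a: "a \<in> topspace X"
    by (simp add: continuous_map_const)
  let ?d = "chain_map p (\<lambda>x. a) c"
  have "homotopic_with (\<lambda>h. h \<in> {} \<rightarrow> {}) X X id (\<lambda>x. a)"
    using hom by simp
  then have "homologous_rel p X {} (chain_map p id c) ?d"
    using homotopic_imp_homologous_rel_chain_maps c by blast
  moreover have "chain_map p id c = c"
    using c chain_map_ident singular_relcycle by metis
  ultimately have c_d: "singular_relboundary p X {} (c - ?d)"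
    by (simp add: homologous_rel_def)
  have "continuous_map X (subtopology X {a}) (\<lambda>x. a)"
    using a by (simp add: continuous_map_in_subtopology)
  then have "singular_relcycle p (subtopology X {a}) {} ?d"
    by (rule singular_relcycle_chain_map[OF c]) simp
  moreover have "topspace (subtopology X {a}) = {a}"
    using a by simp
  ultimately have "singular_relboundary p (subtopology X {a}) {} ?d"
    using singular_boundary_eq_cycle_singleton \<open>p \<noteq> 0\<close> by (metis less_one not_le)
  then have "singular_relboundary p X {} ?d"
    using singular_boundary_mono[where T = "{a}" and S = "topspace X" and X = X] a by simp
  with c_d have "singular_relboundary p X {} ((c - ?d) + ?d)"
    by (rule singular_relboundary_add)
  then show ?thesis
    by simp
qed

lemma prism_boundary_0: "prism_boundary 0 P = cylinder_ends 0 (frag_of (identity_simplex 0))"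
  by (simp add: prism_boundary_def chain_boundary_def cylinder_chain_def)

lemma prism_model_someI:
  assumes "\<exists>d. singular_chain (Suc q) (cylinder (simplex_topology q)) d \<and>
             chain_boundary (Suc q) d = prism_boundary q (prism_model (q - 1))"
  shows "singular_chain (Suc q) (cylinder (simplex_topology q)) (prism_model q) \<and>
         chain_boundary (Suc q) (prism_model q) = prism_boundary q (prism_model (q - 1))"
proof -
  have "prism_boundary q (if q = 0 then 0 else prism_model (q - 1)) = prism_boundary q (prism_model (q - 1))"
    by (simp add: prism_boundary_0)
  then show ?thesis
    using someI_ex[OF assms] by (simp only: prism_model.simps[of q])
qed

lemma singular_chain_cylinder_ends:
  "singular_chain q X c \<Longrightarrow> singular_chain q (cylinder X) (cylinder_ends q c)"
  unfolding cylinder_ends_def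
  by (intro singular_chain_diff singular_chain_chain_map[OF _ continuous_map_cylinder_Pair]) auto

lemma cylinder_ends_0_boundary:
  "\<exists>d. singular_chain 1 (cylinder (simplex_topology 0)) d \<and>
       chain_boundary 1 d = cylinder_ends 0 (frag_of (identity_simplex 0))"
proof -
  have "path_connected_space (cylinder (simplex_topology 0))"
    by (simp add: contractible_imp_path_connected_space contractible_space_cylinder
        contractible_space_standard_simplex)
  moreover have "singular_simplex 0 (cylinder (simplex_topology 0)) (simplex_map 0 (Pair u) (identity_simplex 0))"
    if "u \<in> {0..1}" for u
    using singular_simplex_simplex_map[OF singular_simplex_identity continuous_map_cylinder_Pair[OF that]] .
  ultimately have "homologous_rel 0 (cylinder (simplex_topology 0)) {}
      (frag_of (simplex_map 0 (Pair 1) (identity_simplex 0)))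
      (frag_of (simplex_map 0 (Pair 0) (identity_simplex 0)))"
    by (intro iso_integer_zeroth_homology_group_aux) auto
  then show ?thesis
    by (simp add: homologous_rel_def singular_boundary cylinder_ends_def)
qed

lemma prism_model_spec:
  "singular_chain (Suc q) (cylinder (simplex_topology q)) (prism_model q) \<and>
   chain_boundary (Suc q) (prism_model q) = prism_boundary q (prism_model (q - 1))"
proof (induction q rule: less_induct)
  case (less q)
  show ?case
  proof (cases q)
    case 0
    then show ?thesis
      using cylinder_ends_0_boundary by (intro prism_model_someI) (simp add: prism_boundary_0)
  next
    case (Suc p)
    let ?\<iota> = "frag_of (identity_simplex q)"
    have \<iota>: "singular_chain q (simplex_topology q) ?\<iota>"
      by (simp add: singular_chain_of singular_simplex_identity)
    have model_p: "singular_chain (Suc p) (cylinder (simplex_topology p)) (prism_model p)"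
      "chain_boundary (Suc p) (prism_model p) = prism_boundary p (prism_model (p - 1))"
      using less[of p] Suc by simp_all
    have model_p': "singular_chain (Suc (p - 1)) (cylinder (simplex_topology (p - 1))) (prism_model (p - 1))"
      using less[of "p - 1"] Suc by simp
    have boundary_\<iota>: "singular_chain p (simplex_topology q) (chain_boundary q ?\<iota>)"
      using singular_chain_boundary[OF \<iota>] Suc by simp
    have "chain_boundary p (chain_boundary q ?\<iota>) = 0"
      using chain_boundary_boundary_alt[of p "simplex_topology q" ?\<iota>] \<iota> Suc by simp
    then have "chain_boundary q (cylinder_chain p (prism_model p) (chain_boundary q ?\<iota>))
        = cylinder_ends p (chain_boundary q ?\<iota>)"
      using chain_boundary_cylinder_chain[OF model_p model_p' boundary_\<iota>] Suc
      by (simp add: cylinder_chain_def)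
    then have "chain_boundary q (prism_boundary q (prism_model p)) = 0"
      using Suc chain_boundary_cylinder_ends[OF \<iota>] by (simp add: prism_boundary_def chain_boundary_diff)
    moreover have "singular_chain q (cylinder (simplex_topology q)) (prism_boundary q (prism_model p))"
      using singular_chain_cylinder_chain[OF model_p(1) boundary_\<iota>] singular_chain_cylinder_ends[OF \<iota>] Suc
      by (simp add: prism_boundary_def singular_chain_diff)
    ultimately have "singular_relcycle q (cylinder (simplex_topology q)) {} (prism_boundary q (prism_model p))"
      by (simp add: singular_cycle)
    then have "singular_relboundary q (cylinder (simplex_topology q)) {} (prism_boundary q (prism_model p))"
      using Suc contractible_space_imp_singular_boundary contractible_space_cylinder
        contractible_space_standard_simplex by blast
    then show ?thesis
      using Suc by (intro prism_model_someI) (simp add: singular_boundary)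
  qed
qed

lemma singular_chain_prism:
  "singular_chain q X c \<Longrightarrow> singular_chain (Suc q) (cylinder X) (prism q c)"
  unfolding prism_def using prism_model_spec singular_chain_cylinder_chain by blast

lemma chain_boundary_prism:
  assumes "singular_chain q X c"
  shows "chain_boundary (Suc q) (prism q c) = cylinder_ends q c - prism (q - 1) (chain_boundary q c)"
proof -
  have "singular_chain (Suc (q - 1)) (cylinder (simplex_topology (q - 1))) (prism_model (q - 1))"
    using prism_model_spec by blast
  then show ?thesis
    unfolding prism_def using chain_boundary_cylinder_chain prism_model_spec assms by blast
qed

lemma chain_boundary_chain_map_prism:
  assumes h: "continuous_map (cylinder X) Y h" and c: "singular_chain q X c"
  shows "chain_boundary (Suc q) (chain_map (Suc q) h (prism q c))
       = chain_map q (\<lambda>x. h (1, x)) c - chain_map q (\<lambda>x. h (0, x)) c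
         - chain_map q h (prism (q - 1) (chain_boundary q c))"
proof -
  have "chain_map q h (chain_map q (Pair u) c) = chain_map q (\<lambda>x. h (u, x)) c" for u :: real
    using chain_map_compose[of q h "Pair u"] by (simp add: o_def)
  then show ?thesis
    using chain_boundary_chain_map[OF singular_chain_prism[OF c], of h]
    by (simp add: chain_boundary_prism[OF c] cylinder_ends_def chain_map_diff)
qed

lemma chain_eval_chain_map_prism:
  "chain_eval (\<lambda>\<sigma>. chain_eval c (chain_map (Suc q) h (prism q (frag_of \<sigma>)))) x
     = chain_eval c (chain_map (Suc q) h (prism q x))"
  by (simp add: prism_def cylinder_chain_def chain_eval_chain_map chain_eval_frag_extend)

lemma norm_chain_eval_prism_le:
  fixes c :: "((nat \<Rightarrow> real) \<Rightarrow> 'y) \<Rightarrow> 'v::real_normed_vector"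
  assumes h: "continuous_map (cylinder X) Y h" and \<sigma>: "singular_simplex q X \<sigma>"
    and B: "\<And>s. singular_simplex (Suc q) Y s \<Longrightarrow> norm (c s) \<le> B"
  shows "norm (chain_eval c (chain_map (Suc q) h (prism q (frag_of \<sigma>))))
       \<le> chain_weight (prism_model q) * B"
proof -
  let ?g = "h \<circ> (\<lambda>(t, x). (t, \<sigma> x))"
  have g: "continuous_map (cylinder (simplex_topology q)) Y ?g"
    using \<sigma> h continuous_map_cylinder continuous_map_compose
    unfolding singular_simplex_def by blast
  have "chain_eval c (chain_map (Suc q) h (prism q (frag_of \<sigma>)))
      = chain_eval (\<lambda>s. c (simplex_map (Suc q) ?g s)) (prism_model q)"
    by (simp add: prism_def cylinder_chain_def chain_eval_chain_map simplex_map_compose)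
  also have "norm \<dots> \<le> chain_weight (prism_model q) * B"
  proof (rule norm_chain_eval_le)
    fix s assume "s \<in> Poly_Mapping.keys (prism_model q)"
    then have "singular_simplex (Suc q) (cylinder (simplex_topology q)) s"
      using prism_model_spec by (auto simp: singular_chain_def)
    then show "norm (c (simplex_map (Suc q) ?g s)) \<le> B"
      using B g singular_simplex_simplex_map by blast
  qed
  finally show ?thesis .
qed

section \<open>Bounded primitives on spaces with contractible path components\<close>

lemma contractible_space_contraction:
  assumes "contractible_space X" "topspace X \<noteq> {}"
  obtains a h where "a \<in> topspace X" "continuous_map (cylinder X) X h"
    "\<And>x. h (0, x) = x" "\<And>x. h (1, x) = a"
proof -
  obtain a where "homotopic_with (\<lambda>h. True) X X id (\<lambda>x. a)"
    using assms(1) unfolding contractible_space_def by blast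
  then obtain h where h: "continuous_map (cylinder X) X h" "\<And>x. h (0, x) = x" "\<And>x. h (1, x) = a"
    unfolding homotopic_with_def cylinder_def by auto
  obtain x where "x \<in> topspace X"
    using assms(2) by blast
  then have "h (1, x) \<in> topspace X"
    using continuous_map_image_subset_topspace[OF h(1)] by (force simp: topspace_cylinder)
  then show ?thesis
    using that h by simp
qed

lemma singular_simplex_const:
  "a \<in> topspace X \<Longrightarrow> singular_simplex p X (restrict (\<lambda>_. a) (standard_simplex p))"
  unfolding singular_simplex_def
  by (auto intro: continuous_map_eq[of _ _ "\<lambda>_. a"])

lemma coboundary_const_simplex:
  "coboundary k c (restrict (\<lambda>_. a) (standard_simplex (Suc k)))
     = (if odd k then c (restrict (\<lambda>_. a) (standard_simplex k)) else 0)"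
proof -
  have "singular_face (Suc k) j (restrict (\<lambda>_. a) (standard_simplex (Suc k)))
      = restrict (\<lambda>_. a) (standard_simplex k)" if "j \<le> Suc k" for j
    unfolding singular_face_def using simplical_face_in_standard_simplex[of "Suc k" j] that
    by (auto simp: fun_eq_iff)
  then have "coboundary k c (restrict (\<lambda>_. a) (standard_simplex (Suc k)))
      = coboundary k (\<lambda>_. c (restrict (\<lambda>_. a) (standard_simplex k))) (restrict (\<lambda>_. a) (standard_simplex (Suc k)))"
    by (intro coboundary_cong) simp
  then show ?thesis
    by (simp add: coboundary_const)
qed

definition simplex_component :: "'x topology \<Rightarrow> nat \<Rightarrow> ((nat \<Rightarrow> real) \<Rightarrow> 'x) \<Rightarrow> 'x set" where
  "simplex_component Z q s = (SOME K. K \<in> path_components_of Z \<and> s ` standard_simplex q \<subseteq> K)"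

lemma simplex_component:
  assumes "singular_simplex q Z s"
  shows "simplex_component Z q s \<in> path_components_of Z"
    and "s ` standard_simplex q \<subseteq> simplex_component Z q s"
proof -
  have cont: "continuous_map (simplex_topology q) Z s"
    using assms singular_simplex_def by blast
  obtain x where x: "x \<in> standard_simplex q"
    using nonempty_standard_simplex by blast
  then have "s x \<in> topspace Z"
    using continuous_map_image_subset_topspace[OF cont] by auto
  then have "s x \<in> \<Union>(path_components_of Z)"
    by (simp add: Union_path_components_of)
  then obtain K where K: "K \<in> path_components_of Z" "s x \<in> K"
    by blast
  have "path_connectedin Z (s ` standard_simplex q)"
    by (simp add: path_connectedin_subtopology path_connectedin_standard_simplex
        path_connectedin_continuous_map_image[OF cont])
  then have "s ` standard_simplex q \<subseteq> K"
    using path_components_of_maximal[OF K(1)] K(2) x by (auto simp: disjnt_def)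
  with K have "\<exists>K. K \<in> path_components_of Z \<and> s ` standard_simplex q \<subseteq> K"
    by blast
  from someI_ex[OF this]
  show "simplex_component Z q s \<in> path_components_of Z" "s ` standard_simplex q \<subseteq> simplex_component Z q s"
    unfolding simplex_component_def by blast+
qed

lemma simplex_component_eq:
  assumes "singular_simplex q Z s" "K \<in> path_components_of Z" "s ` standard_simplex q \<subseteq> K"
  shows "simplex_component Z q s = K"
proof -
  obtain x where "x \<in> standard_simplex q"
    using nonempty_standard_simplex by blast
  then have "\<not> disjnt (simplex_component Z q s) K"
    using simplex_component[OF assms(1)] assms(3) by (auto simp: disjnt_def)
  then show ?thesis
    using path_components_of_disjoint simplex_component(1)[OF assms(1)] assms(2) by blast
qed

lemma coboundary_chain_eval_contraction:
  fixes c :: "((nat \<Rightarrow> real) \<Rightarrow> 'x) \<Rightarrow> 'w::real_vector"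
  assumes h: "continuous_map (cylinder X) Z h" and h0: "\<And>x. h (0, x) = x" and h1: "\<And>x. h (1, x) = a"
    and s: "singular_simplex (Suc p) X s"
    and cocycle: "\<And>t. singular_simplex (Suc (Suc p)) Z t \<Longrightarrow> coboundary (Suc p) c t = 0"
  shows "coboundary p (\<lambda>t. chain_eval c (chain_map (Suc p) h (prism p (frag_of t)))) s
       = c (restrict (\<lambda>_. a) (standard_simplex (Suc p))) - c s"
proof -
  let ?D = "chain_map (Suc (Suc p)) h (prism (Suc p) (frag_of s))"
  have s_chain: "singular_chain (Suc p) X (frag_of s)"
    using s by (simp add: singular_chain_of)
  have "singular_chain (Suc (Suc p)) Z ?D"
    using singular_chain_chain_map[OF singular_chain_prism[OF s_chain] h] .
  then have "chain_eval c (chain_boundary (Suc (Suc p)) ?D) = 0"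
    unfolding chain_eval_chain_boundary
    by (intro chain_eval_eq_0 cocycle) (auto simp: singular_chain_def)
  moreover have "simplex_map (Suc p) (\<lambda>x. h (1, x)) s = restrict (\<lambda>_. a) (standard_simplex (Suc p))"
    by (simp add: h1 simplex_map_def o_def)
  moreover have "simplex_map (Suc p) (\<lambda>x. h (0, x)) s = s"
    using s by (simp add: h0 simplex_map_id_gen)
  moreover have "coboundary p (\<lambda>t. chain_eval c (chain_map (Suc p) h (prism p (frag_of t)))) s
      = chain_eval (\<lambda>t. chain_eval c (chain_map (Suc p) h (prism p (frag_of t)))) (chain_boundary (Suc p) (frag_of s))"
    by (simp only: chain_eval_chain_boundary chain_eval_of)
  ultimately show ?thesis
    by (simp add: chain_eval_chain_map_prism chain_boundary_chain_map_prism[OF h s_chain] chain_eval_diff)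
qed

lemma cocycle_const_simplex_eq_0:
  assumes "a \<in> topspace Z" "even p"
    and cocycle: "\<And>t. singular_simplex (Suc (Suc p)) Z t \<Longrightarrow> coboundary (Suc p) c t = 0"
  shows "c (restrict (\<lambda>_. a) (standard_simplex (Suc p))) = 0"
proof -
  have "coboundary (Suc p) c (restrict (\<lambda>_. a) (standard_simplex (Suc (Suc p)))) = 0"
    using assms(1) by (intro cocycle singular_simplex_const)
  then show ?thesis
    using assms(2) by (simp only: coboundary_const_simplex) simp
qed

lemma singular_simplex_simplex_component:
  "singular_simplex q Z s \<Longrightarrow> singular_simplex q (subtopology Z (simplex_component Z q s)) s"
  using simplex_component by (simp add: singular_simplex_subtopology)

lemma simplex_component_singular_face:
  assumes "singular_simplex (Suc p) Z s" "j \<le> Suc p"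
  shows "simplex_component Z p (singular_face (Suc p) j s) = simplex_component Z (Suc p) s"
  using singular_simplex_singular_face[OF singular_simplex_simplex_component[OF assms(1)] _ assms(2)]
    simplex_component(1)[OF assms(1)]
  by (intro simplex_component_eq) (auto simp: singular_simplex_subtopology)

lemma path_components_contractions:
  assumes "\<And>K. K \<in> path_components_of Z \<Longrightarrow> contractible_space (subtopology Z K)"
  obtains a h where "\<And>K. K \<in> path_components_of Z \<Longrightarrow> a K \<in> K"
    and "\<And>K. K \<in> path_components_of Z \<Longrightarrow> continuous_map (cylinder (subtopology Z K)) Z (h K)"
    and "\<And>K x. K \<in> path_components_of Z \<Longrightarrow> h K (0, x) = x"
    and "\<And>K x. K \<in> path_components_of Z \<Longrightarrow> h K (1, x) = a K"
proof -
  have "\<forall>K\<in>path_components_of Z. \<exists>a h. a \<in> K \<and> continuous_map (cylinder (subtopology Z K)) Z h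
          \<and> (\<forall>x. h (0, x) = x) \<and> (\<forall>x. h (1, x) = a)"
  proof
    fix K assume K: "K \<in> path_components_of Z"
    then have "topspace (subtopology Z K) = K"
      using path_components_of_subset by fastforce
    moreover have "K \<noteq> {}"
      using K nonempty_path_components_of by blast
    ultimately show "\<exists>a h. a \<in> K \<and> continuous_map (cylinder (subtopology Z K)) Z h
          \<and> (\<forall>x. h (0, x) = x) \<and> (\<forall>x. h (1, x) = a)"
      using contractible_space_contraction[OF assms[OF K]] continuous_map_into_fulltopology
      by metis
  qed
  then show ?thesis
    using that by metis
qed

lemma bounded_cocycle_has_bounded_primitive:
  fixes c :: "((nat \<Rightarrow> real) \<Rightarrow> 'x) \<Rightarrow> 'v::real_normed_vector"
  assumes comps: "\<And>K. K \<in> path_components_of Z \<Longrightarrow> contractible_space (subtopology Z K)"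
    and bound: "\<And>s. singular_simplex (Suc p) Z s \<Longrightarrow> norm (c s) \<le> B"
    and cocycle: "\<And>t. singular_simplex (Suc (Suc p)) Z t \<Longrightarrow> coboundary (Suc p) c t = 0"
  obtains b M where "\<And>s. singular_simplex p Z s \<Longrightarrow> norm (b s) \<le> M"
    and "\<And>s. singular_simplex (Suc p) Z s \<Longrightarrow> coboundary p b s = c s"
proof -
  obtain a h where a: "\<And>K. K \<in> path_components_of Z \<Longrightarrow> a K \<in> K"
    and h: "\<And>K. K \<in> path_components_of Z \<Longrightarrow> continuous_map (cylinder (subtopology Z K)) Z (h K)"
    and h0: "\<And>K x. K \<in> path_components_of Z \<Longrightarrow> h K (0, x) = x"
    and h1: "\<And>K x. K \<in> path_components_of Z \<Longrightarrow> h K (1, x) = a K"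
    using path_components_contractions[OF comps] by metis
  define vertex where "vertex K = restrict (\<lambda>_. a K) (standard_simplex (Suc p))" for K
  define E where "E K t = chain_eval c (chain_map (Suc p) (h K) (prism p (frag_of t)))" for K t
  define b where "b t = c (vertex (simplex_component Z p t)) - E (simplex_component Z p t) t" for t
  have vertex: "singular_simplex (Suc p) Z (vertex K)" if "K \<in> path_components_of Z" for K
    unfolding vertex_def using a[OF that] path_components_of_subset[OF that]
    by (intro singular_simplex_const) blast
  show thesis
  proof
    fix t assume t: "singular_simplex p Z t"
    let ?K = "simplex_component Z p t"
    have K: "?K \<in> path_components_of Z"
      using simplex_component[OF t] by blast
    have "norm (E ?K t) \<le> chain_weight (prism_model p) * B"
      unfolding E_def
      using norm_chain_eval_prism_le h[OF K] singular_simplex_simplex_component[OF t] bound by blast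
    moreover have "norm (c (vertex ?K)) \<le> B"
      using bound vertex[OF K] by blast
    ultimately show "norm (b t) \<le> B + chain_weight (prism_model p) * B"
      unfolding b_def using norm_triangle_ineq4[of "c (vertex ?K)" "E ?K t"] by linarith
  next
    fix s assume s: "singular_simplex (Suc p) Z s"
    let ?K = "simplex_component Z (Suc p) s"
    have K: "?K \<in> path_components_of Z"
      using simplex_component[OF s] by blast
    have "coboundary p b s = coboundary p (\<lambda>t. c (vertex ?K) - E ?K t) s"
      unfolding b_def by (intro coboundary_cong) (simp add: simplex_component_singular_face[OF s])
    also have "\<dots> = (if odd p then c (vertex ?K) else 0) - coboundary p (E ?K) s"
      by (simp add: coboundary_diff coboundary_const)
    also have "coboundary p (E ?K) s = c (vertex ?K) - c s"
      unfolding E_def vertex_def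
      using h[OF K] h0[OF K] h1[OF K] singular_simplex_simplex_component[OF s] cocycle
      by (rule coboundary_chain_eval_contraction)
    also have "(if odd p then c (vertex ?K) else 0) - (c (vertex ?K) - c s) = c s"
      using cocycle_const_simplex_eq_0[OF _ _ cocycle] a[OF K] path_components_of_subset[OF K]
      by (auto simp: vertex_def)
    finally show "coboundary p b s = c s" .
  qed
qed

lemma norm_coboundary_le:
  fixes c :: "((nat \<Rightarrow> real) \<Rightarrow> 'x) \<Rightarrow> 'v::real_normed_vector"
  assumes "\<And>t. norm (c t) \<le> M"
  shows "norm (coboundary k c s) \<le> real (Suc (Suc k)) * M"
proof -
  have "norm (coboundary k c s) \<le> (\<Sum>j\<le>Suc k. norm (((-1::real) ^ j) *\<^sub>R c (singular_face (Suc k) j s)))"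
    unfolding coboundary_def by (rule norm_sum)
  also have "\<dots> \<le> (\<Sum>j\<le>Suc k. M)"
    by (rule sum_mono) (simp add: assms)
  finally show ?thesis
    by simp
qed

lemma contractible_space_path_component:
  assumes X: "contractible_space X" and K: "K \<in> path_components_of X"
  shows "contractible_space (subtopology X K)"
proof -
  have "path_connected_space X"
    using X by (rule contractible_imp_path_connected_space)
  then have "path_components_of X \<subseteq> {topspace X}"
    by (simp add: path_components_of_subset_singleton)
  then show ?thesis
    using K X by (metis singletonD subsetD subtopology_topspace)
qed

lemma bounded_relative_cocycle_has_bounded_primitive:
  fixes f :: "((nat \<Rightarrow> real) \<Rightarrow> 'x) \<Rightarrow> 'v::real_normed_vector"
  assumes X: "contractible_space X"
    and Y: "\<And>K. K \<in> path_components_of (subtopology X Y) \<Longrightarrow> contractible_space (subtopology (subtopology X Y) K)"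
    and bound: "\<And>s. singular_simplex (Suc (Suc p)) X s \<Longrightarrow> norm (f s) \<le> B"
    and cocycle: "\<And>t. singular_simplex (Suc (Suc (Suc p))) X t \<Longrightarrow> coboundary (Suc (Suc p)) f t = 0"
    and relative: "\<And>s. singular_simplex (Suc (Suc p)) (subtopology X Y) s \<Longrightarrow> f s = 0"
  obtains b M where "\<And>s. singular_simplex (Suc p) X s \<Longrightarrow> norm (b s) \<le> M"
    and "\<And>s. singular_simplex (Suc (Suc p)) X s \<Longrightarrow> coboundary (Suc p) b s = f s"
    and "\<And>s. singular_simplex (Suc p) (subtopology X Y) s \<Longrightarrow> b s = 0"
proof -
  note components_X = contractible_space_path_component[OF X]
  obtain b0 M0 where b0_bound: "\<And>s. singular_simplex (Suc p) X s \<Longrightarrow> norm (b0 s) \<le> M0"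
    and b0: "\<And>s. singular_simplex (Suc (Suc p)) X s \<Longrightarrow> coboundary (Suc p) b0 s = f s"
    by (rule bounded_cocycle_has_bounded_primitive[OF components_X bound cocycle]) auto
  let ?Z = "subtopology X Y"
  have Z: "singular_simplex q ?Z s \<Longrightarrow> singular_simplex q X s" for q s
    by (simp add: singular_simplex_subtopology)
  obtain a M1 where a_bound: "\<And>s. singular_simplex p ?Z s \<Longrightarrow> norm (a s) \<le> M1"
    and a: "\<And>s. singular_simplex (Suc p) ?Z s \<Longrightarrow> coboundary p a s = b0 s"
  proof (rule bounded_cocycle_has_bounded_primitive[OF Y])
    show "norm (b0 s) \<le> M0" if "singular_simplex (Suc p) ?Z s" for s
      using b0_bound Z that by blast
    show "coboundary (Suc p) b0 t = 0" if "singular_simplex (Suc (Suc p)) ?Z t" for t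
      using b0[OF Z[OF that]] relative[OF that] by simp
  qed auto
  define a0 where "a0 s = (if singular_simplex p ?Z s then a s else 0)" for s
  have "norm (a0 s) \<le> max 0 M1" for s
    using a_bound[of s] by (auto simp: a0_def)
  then have a0_bound: "norm (coboundary p a0 s) \<le> real (Suc (Suc p)) * max 0 M1" for s
    by (rule norm_coboundary_le)
  show thesis
  proof
    fix s assume "singular_simplex (Suc p) X s"
    then show "norm (b0 s - coboundary p a0 s) \<le> M0 + real (Suc (Suc p)) * max 0 M1"
      using b0_bound norm_triangle_ineq4[of "b0 s" "coboundary p a0 s"] a0_bound[of s] by fastforce
  next
    fix s assume "singular_simplex (Suc (Suc p)) X s"
    then show "coboundary (Suc p) (\<lambda>s. b0 s - coboundary p a0 s) s = f s"
      by (simp add: coboundary_diff b0 coboundary_coboundary)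
  next
    fix s assume s: "singular_simplex (Suc p) ?Z s"
    have "singular_simplex p ?Z (singular_face (Suc p) j s)" if "j \<le> Suc p" for j
      using singular_simplex_singular_face[OF s _ that] by simp
    then have "coboundary p a0 s = coboundary p a s"
      unfolding a0_def by (intro coboundary_cong) simp
    then show "b0 s - coboundary p a0 s = 0"
      using a[OF s] by simp
  qed
qed

section \<open>Equivariant cochains of a group pair\<close>

lemma classifying_pair_cover_action:
  assumes "classifying_pair_cover G I H X \<phi> Yt C"
  shows "\<And>g. g \<in> carrier G \<Longrightarrow> continuous_map X X (\<phi> g)"
    and "\<And>g h x. \<lbrakk>g \<in> carrier G; h \<in> carrier G; x \<in> topspace X\<rbrakk>
           \<Longrightarrow> \<phi> (g \<otimes>\<^bsub>G\<^esub> h) x = \<phi> g (\<phi> h x)"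
  using assms unfolding classifying_pair_cover_def
  by (simp_all add: homeomorphic_imp_continuous_map)

lemma simplex_map_action:
  assumes "classifying_pair_cover G I H X \<phi> Yt C" "g \<in> carrier G" "h \<in> carrier G"
    and "singular_simplex q X s"
  shows "simplex_map q (\<phi> g) (simplex_map q (\<phi> h) s) = simplex_map q (\<phi> (g \<otimes>\<^bsub>G\<^esub> h)) s"
proof -
  have "simplex_map q (\<phi> g) (simplex_map q (\<phi> h) s) = simplex_map q (\<phi> g \<circ> \<phi> h) s"
    by (simp add: simplex_map_compose)
  also have "\<dots> = simplex_map q (\<phi> (g \<otimes>\<^bsub>G\<^esub> h)) s"
    using classifying_pair_cover_action(2)[OF assms(1-3)] by (intro simplex_map_eq[OF assms(4)]) simp
  finally show ?thesis .
qed

lemma singular_simplex_action: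
  assumes "classifying_pair_cover G I H X \<phi> Yt C" "g \<in> carrier G" "singular_simplex q X s"
  shows "singular_simplex q X (simplex_map q (\<phi> g) s)"
  using singular_simplex_simplex_map[OF assms(3) classifying_pair_cover_action(1)[OF assms(1,2)]] .

lemma classifying_pair_cover_components:
  assumes cover: "classifying_pair_cover G I H X \<phi> Yt C"
    and K: "K \<in> path_components_of (subtopology X Yt)"
  shows "contractible_space (subtopology (subtopology X Yt) K)"
proof -
  have "path_components_of (subtopology X Yt) = {\<phi> g ` C i | i g. i \<in> I \<and> g \<in> carrier G}"
    using cover by (simp add: classifying_pair_cover_def)
  then obtain i g where ig: "i \<in> I" "g \<in> carrier G" "K = \<phi> g ` C i"
    using K by blast
  have Ci: "openin (subtopology X Yt) (C i)" "contractible_space (subtopology X (C i))"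
    using ig(1) cover by (simp_all add: classifying_pair_cover_def)
  have "closedin X Yt"
    using cover by (simp add: classifying_pair_cover_def)
  then have Yt: "Yt \<subseteq> topspace X"
    by (rule closedin_subset)
  have homeo: "homeomorphic_map X X (\<phi> g)"
    using ig(2) cover by (simp add: classifying_pair_cover_def)
  have "C i \<subseteq> topspace X"
    using openin_subset[OF Ci(1)] Yt by auto
  moreover have "\<phi> g ` topspace X = topspace X"
    using homeo homeomorphic_imp_surjective_map by blast
  ultimately have "homeomorphic_map (subtopology X (C i)) (subtopology X K) (\<phi> g)"
    unfolding ig(3) by (intro homeomorphic_map_subtopologies[OF homeo]) auto
  then have "subtopology X (C i) homeomorphic_space subtopology X K"
    by (rule homeomorphic_map_imp_homeomorphic_space)
  then have "contractible_space (subtopology X K)"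
    using Ci(2) homeomorphic_space_contractibility by blast
  moreover have "K \<subseteq> Yt"
    using path_components_of_subset[OF K] by simp
  ultimately show ?thesis
    by (simp add: subtopology_subtopology Int_absorb1)
qed

lemma classifying_pair_cover_invariant:
  assumes "group G" and cover: "classifying_pair_cover G I H X \<phi> Yt C"
    and g: "g \<in> carrier G" and y: "y \<in> Yt"
  shows "\<phi> g y \<in> Yt"
proof -
  have "closedin X Yt"
    using cover by (simp add: classifying_pair_cover_def)
  then have Yt: "Yt \<subseteq> topspace X"
    by (rule closedin_subset)
  have components: "path_components_of (subtopology X Yt) = {\<phi> g ` C i | i g. i \<in> I \<and> g \<in> carrier G}"
    using cover by (simp add: classifying_pair_cover_def)
  have "y \<in> \<Union>(path_components_of (subtopology X Yt))"
    using y Yt by (auto simp: Union_path_components_of)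
  then obtain i g' z where i: "i \<in> I" and g': "g' \<in> carrier G" and z: "z \<in> C i" "y = \<phi> g' z"
    unfolding components by blast
  have "openin (subtopology X Yt) (C i)"
    using i cover by (simp add: classifying_pair_cover_def)
  then have "C i \<subseteq> Yt"
    using openin_subset by fastforce
  then have "\<phi> g y = \<phi> (g \<otimes>\<^bsub>G\<^esub> g') z"
    using classifying_pair_cover_action(2)[OF cover g g'] z Yt by auto
  moreover have "\<phi> (g \<otimes>\<^bsub>G\<^esub> g') ` C i \<in> path_components_of (subtopology X Yt)"
    unfolding components using i monoid.m_closed[OF group.is_monoid[OF \<open>group G\<close>] g g'] by blast
  then have "\<phi> (g \<otimes>\<^bsub>G\<^esub> g') ` C i \<subseteq> Yt"
    using path_components_of_subset by fastforce
  ultimately show ?thesis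
    using z by auto
qed

(* Inverse of c |-> (s |-> c s 1): an equivariant cochain with values in l^infinity(G,V) is
   determined by its values at the identity. *)
definition induced_cochain ::
  "('g, 'b) monoid_scheme \<Rightarrow> ('g \<Rightarrow> 'v::real_normed_vector \<Rightarrow> 'v) \<Rightarrow> ('g \<Rightarrow> 'x \<Rightarrow> 'x) \<Rightarrow> nat
     \<Rightarrow> (((nat \<Rightarrow> real) \<Rightarrow> 'x) \<Rightarrow> 'v) \<Rightarrow> ((nat \<Rightarrow> real) \<Rightarrow> 'x) \<Rightarrow> 'g \<Rightarrow> 'v" where
  "induced_cochain G \<rho> \<phi> q f \<sigma> =
     (\<lambda>h. if h \<in> carrier G then \<rho> h (f (simplex_map q (\<phi> (inv\<^bsub>G\<^esub> h)) \<sigma>)) else 0)"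

lemma singular_face_simplex_map_Suc:
  assumes "j \<le> Suc q"
  shows "singular_face (Suc q) j (simplex_map (Suc q) f s) = simplex_map q f (singular_face (Suc q) j s)"
  using assms by (fastforce simp: singular_face_def simplex_map_def simplical_face_in_standard_simplex)

lemma cobound_apply: "cobound k c \<sigma> h = coboundary k (\<lambda>s. c s h) \<sigma>"
  by (simp add: cobound_def coboundary_def)

lemma induced_cochain_cong:
  "(\<And>h. h \<in> carrier G \<Longrightarrow> f (simplex_map q (\<phi> (inv\<^bsub>G\<^esub> h)) \<sigma>) = f' (simplex_map q (\<phi> (inv\<^bsub>G\<^esub> h)) \<sigma>))
    \<Longrightarrow> induced_cochain G \<rho> \<phi> q f \<sigma> = induced_cochain G \<rho> \<phi> q f' \<sigma>"
  by (simp add: induced_cochain_def fun_eq_iff)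

lemma cobound_induced_cochain:
  assumes "normed_RG_module G \<rho>"
  shows "cobound q (induced_cochain G \<rho> \<phi> q f) \<sigma> = induced_cochain G \<rho> \<phi> (Suc q) (coboundary q f) \<sigma>"
proof
  fix h
  show "cobound q (induced_cochain G \<rho> \<phi> q f) \<sigma> h = induced_cochain G \<rho> \<phi> (Suc q) (coboundary q f) \<sigma> h"
  proof (cases "h \<in> carrier G")
    case True
    then have "linear (\<rho> h)"
      using assms by (simp add: normed_RG_module_def)
    then show ?thesis
      using True
      by (simp del: sum.atMost_Suc add: cobound_def coboundary_def induced_cochain_def
          singular_face_simplex_map_Suc linear_sum linear_scale)
  qed (simp add: cobound_def induced_cochain_def)
qed

lemma normed_RG_module_inv_cancel:
  assumes "group G" "normed_RG_module G \<rho>" "h \<in> carrier G"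
  shows "\<rho> h (\<rho> (inv\<^bsub>G\<^esub> h) v) = v"
proof -
  have "\<rho> h (\<rho> (inv\<^bsub>G\<^esub> h) v) = \<rho> (h \<otimes>\<^bsub>G\<^esub> inv\<^bsub>G\<^esub> h) v"
    using assms by (simp add: normed_RG_module_def)
  then show ?thesis
    using assms by (simp add: normed_RG_module_def group.r_inv)
qed

lemma induced_cochain_action:
  assumes G: "group G" and \<rho>: "normed_RG_module G \<rho>"
    and cover: "classifying_pair_cover G I H X \<phi> Yt C"
    and g: "g \<in> carrier G" and s: "singular_simplex q X s"
  shows "induced_cochain G \<rho> \<phi> q f (simplex_map q (\<phi> g) s) = linf_act G \<rho> g (induced_cochain G \<rho> \<phi> q f s)"
proof
  interpret group G by (rule G)
  fix h
  show "induced_cochain G \<rho> \<phi> q f (simplex_map q (\<phi> g) s) h = linf_act G \<rho> g (induced_cochain G \<rho> \<phi> q f s) h"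
  proof (cases "h \<in> carrier G")
    case True
    have "induced_cochain G \<rho> \<phi> q f (simplex_map q (\<phi> g) s) h
        = \<rho> h (f (simplex_map q (\<phi> (inv\<^bsub>G\<^esub> h \<otimes>\<^bsub>G\<^esub> g)) s))"
      using True g simplex_map_action[OF cover _ g s, of "inv\<^bsub>G\<^esub> h"]
      by (simp add: induced_cochain_def)
    also have "\<dots> = \<rho> g (\<rho> (inv\<^bsub>G\<^esub> g \<otimes>\<^bsub>G\<^esub> h) (f (simplex_map q (\<phi> (inv\<^bsub>G\<^esub> h \<otimes>\<^bsub>G\<^esub> g)) s)))"
      using \<rho> True g by (simp add: normed_RG_module_def normed_RG_module_inv_cancel[OF G \<rho> g])
    also have "\<dots> = linf_act G \<rho> g (induced_cochain G \<rho> \<phi> q f s) h"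
      using True g by (simp add: linf_act_def induced_cochain_def inv_mult_group)
    finally show ?thesis .
  qed (simp add: induced_cochain_def linf_act_def)
qed

lemma rel_bcochain_induced_cochain:
  fixes f :: "((nat \<Rightarrow> real) \<Rightarrow> 'x) \<Rightarrow> 'v::real_normed_vector"
  assumes G: "group G" and \<rho>: "normed_RG_module G \<rho>"
    and cover: "classifying_pair_cover G I H X \<phi> Yt C"
    and bound: "\<And>s. singular_simplex q X s \<Longrightarrow> norm (f s) \<le> M"
    and relative: "\<And>s. singular_simplex q (subtopology X Yt) s \<Longrightarrow> f s = 0"
  shows "rel_bcochain G \<rho> X \<phi> Yt q (induced_cochain G \<rho> \<phi> q f)"
proof -
  have inv: "inv\<^bsub>G\<^esub> h \<in> carrier G" if "h \<in> carrier G" for h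
    using G that by (rule group.inv_closed)
  have bounded: "norm (induced_cochain G \<rho> \<phi> q f s h) \<le> M"
    if "singular_simplex q X s" "h \<in> carrier G" for s h
    using that bound[OF singular_simplex_action[OF cover inv]] \<rho>
    by (simp add: induced_cochain_def normed_RG_module_def)
  have relative_translate: "f (simplex_map q (\<phi> (inv\<^bsub>G\<^esub> h)) s) = 0"
    if "singular_simplex q X s" "s ` standard_simplex q \<subseteq> Yt" "h \<in> carrier G" for s h
    using that singular_simplex_action[OF cover inv[OF that(3)] that(1)]
      classifying_pair_cover_invariant[OF G cover inv[OF that(3)]]
    by (intro relative) (auto simp: singular_simplex_subtopology simplex_map_def)
  show ?thesis
    unfolding rel_bcochain_def
  proof (intro conjI allI impI ballI exI)
    fix s assume "singular_simplex q X s"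
    then show "induced_cochain G \<rho> \<phi> q f s \<in> linf G"
      using bounded unfolding linf_def by (auto simp: induced_cochain_def)
  next
    fix s h assume "h \<in> carrier G" "singular_simplex q X s"
    then show "norm (induced_cochain G \<rho> \<phi> q f s h) \<le> M"
      using bounded by blast
  next
    fix g s assume "g \<in> carrier G" "singular_simplex q X s"
    then show "induced_cochain G \<rho> \<phi> q f (restrict (\<phi> g \<circ> s) (standard_simplex q))
        = linf_act G \<rho> g (induced_cochain G \<rho> \<phi> q f s)"
      using induced_cochain_action[OF G \<rho> cover] by (simp add: simplex_map_def)
  next
    fix s assume "singular_simplex q X s \<and> s ` standard_simplex q \<subseteq> Yt"
    then show "induced_cochain G \<rho> \<phi> q f s = (\<lambda>h. 0)"
      using relative_translate \<rho> by (auto simp: induced_cochain_def normed_RG_module_def linear_0)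
  qed
qed

lemma induced_cochain_eval_one:
  assumes G: "group G" and \<rho>: "normed_RG_module G \<rho>"
    and cover: "classifying_pair_cover G I H X \<phi> Yt C"
    and c: "rel_bcochain G \<rho> X \<phi> Yt q c" and s: "singular_simplex q X s"
  shows "induced_cochain G \<rho> \<phi> q (\<lambda>s. c s \<one>\<^bsub>G\<^esub>) s = c s"
proof
  interpret group G by (rule G)
  fix h
  show "induced_cochain G \<rho> \<phi> q (\<lambda>s. c s \<one>\<^bsub>G\<^esub>) s h = c s h"
  proof (cases "h \<in> carrier G")
    case True
    have "c (simplex_map q (\<phi> (inv\<^bsub>G\<^esub> h)) s) = linf_act G \<rho> (inv\<^bsub>G\<^esub> h) (c s)"
      using c s True unfolding rel_bcochain_def simplex_map_def by blast
    then show ?thesis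
      using True by (simp add: induced_cochain_def linf_act_def normed_RG_module_inv_cancel[OF G \<rho>])
  next
    case False
    have "c s \<in> linf G"
      using c s unfolding rel_bcochain_def by blast
    then show ?thesis
      using False by (simp add: induced_cochain_def linf_def)
  qed
qed

lemma rel_bcocycle_bounded_primitive:
  assumes G: "group G" and \<rho>: "normed_RG_module G \<rho>"
    and cover: "classifying_pair_cover G I H X \<phi> Yt C"
    and c: "rel_bcochain G \<rho> X \<phi> Yt (Suc (Suc p)) c"
    and cocycle: "\<forall>\<tau>. singular_simplex (Suc (Suc (Suc p))) X \<tau> \<longrightarrow> cobound (Suc (Suc p)) c \<tau> = (\<lambda>h. 0)"
  obtains b M where "\<And>s. singular_simplex (Suc p) X s \<Longrightarrow> norm (b s) \<le> M"
    and "\<And>s. singular_simplex (Suc (Suc p)) X s \<Longrightarrow> coboundary (Suc p) b s = c s \<one>\<^bsub>G\<^esub>"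
    and "\<And>s. singular_simplex (Suc p) (subtopology X Yt) s \<Longrightarrow> b s = 0"
proof -
  have "\<one>\<^bsub>G\<^esub> \<in> carrier G"
    using G by (simp add: group.is_monoid)
  then obtain B where B: "\<And>s. singular_simplex (Suc (Suc p)) X s \<Longrightarrow> norm (c s \<one>\<^bsub>G\<^esub>) \<le> B"
    using c unfolding rel_bcochain_def by blast
  have X: "contractible_space X"
    using cover by (simp add: classifying_pair_cover_def)
  have f_cocycle: "coboundary (Suc (Suc p)) (\<lambda>s. c s \<one>\<^bsub>G\<^esub>) t = 0"
    if "singular_simplex (Suc (Suc (Suc p))) X t" for t
    using cocycle that by (simp flip: cobound_apply)
  have f_relative: "c s \<one>\<^bsub>G\<^esub> = 0" if "singular_simplex (Suc (Suc p)) (subtopology X Yt) s" for s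
    using c that unfolding rel_bcochain_def by (simp add: singular_simplex_subtopology)
  show thesis
    using bounded_relative_cocycle_has_bounded_primitive[OF X classifying_pair_cover_components[OF cover]
        B f_cocycle f_relative] that
    by metis
qed

lemma cobound_induced_cochain_eq:
  assumes G: "group G" and \<rho>: "normed_RG_module G \<rho>"
    and cover: "classifying_pair_cover G I H X \<phi> Yt C"
    and c: "rel_bcochain G \<rho> X \<phi> Yt (Suc q) c"
    and b: "\<And>s. singular_simplex (Suc q) X s \<Longrightarrow> coboundary q b s = c s \<one>\<^bsub>G\<^esub>"
    and \<sigma>: "singular_simplex (Suc q) X \<sigma>"
  shows "cobound q (induced_cochain G \<rho> \<phi> q b) \<sigma> = c \<sigma>"
proof -
  have "cobound q (induced_cochain G \<rho> \<phi> q b) \<sigma> = induced_cochain G \<rho> \<phi> (Suc q) (coboundary q b) \<sigma>"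
    by (rule cobound_induced_cochain[OF \<rho>])
  also have "\<dots> = induced_cochain G \<rho> \<phi> (Suc q) (\<lambda>s. c s \<one>\<^bsub>G\<^esub>) \<sigma>"
    using b singular_simplex_action[OF cover _ \<sigma>] G
    by (intro induced_cochain_cong) (simp add: group.inv_closed)
  also have "\<dots> = c \<sigma>"
    by (rule induced_cochain_eval_one[OF G \<rho> cover c \<sigma>])
  finally show ?thesis .
qed

theorem mainTheorem7:
  fixes G :: "('g, 'b) monoid_scheme" and I :: "'i set" and H :: "'i \<Rightarrow> 'g set"
    and \<rho> :: "'g \<Rightarrow> 'v::real_normed_vector \<Rightarrow> 'v"
    and X :: "'x topology" and \<phi> :: "'g \<Rightarrow> 'x \<Rightarrow> 'x" and Yt :: "'x set" and C :: "'i \<Rightarrow> 'x set"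
    and k :: nat
  assumes "group G"
    and "\<forall>i\<in>I. subgroup (H i) G"
    and "normed_RG_module G \<rho>"
    and "classifying_pair_cover G I H X \<phi> Yt C"
    and "2 \<le> k"
  shows "rel_bcohom_vanishes G \<rho> X \<phi> Yt k"
proof -
  obtain p where k: "k = Suc (Suc p)"
    using \<open>2 \<le> k\<close> by (metis add_2_eq_Suc le_Suc_ex)
  show ?thesis
    unfolding rel_bcohom_vanishes_def k diff_Suc_1
  proof (intro allI impI, elim conjE)
    fix c
    assume c: "rel_bcochain G \<rho> X \<phi> Yt (Suc (Suc p)) c"
      and "\<forall>\<tau>. singular_simplex (Suc (Suc (Suc p))) X \<tau> \<longrightarrow> cobound (Suc (Suc p)) c \<tau> = (\<lambda>h. 0)"
    then obtain b M where "\<And>s. singular_simplex (Suc p) X s \<Longrightarrow> norm (b s) \<le> M"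
      and "\<And>s. singular_simplex (Suc (Suc p)) X s \<Longrightarrow> coboundary (Suc p) b s = c s \<one>\<^bsub>G\<^esub>"
      and "\<And>s. singular_simplex (Suc p) (subtopology X Yt) s \<Longrightarrow> b s = 0"
      by (rule rel_bcocycle_bounded_primitive[OF assms(1,3,4)]) auto
    then show "\<exists>b. rel_bcochain G \<rho> X \<phi> Yt (Suc p) b \<and>
        (\<forall>\<sigma>. singular_simplex (Suc (Suc p)) X \<sigma> \<longrightarrow> cobound (Suc p) b \<sigma> = c \<sigma>)"
      using rel_bcochain_induced_cochain[OF assms(1,3,4)] cobound_induced_cochain_eq[OF assms(1,3,4) c]
      by blast
  qed
qed

end
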